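(* Let $C_{\max}>0$ and let $a\in C^1(\overline\Omega)$ satisfy $\{a>0\}\ne\emptyset$. There exists a constant $\kappa_0>0$ such that, if $\kappa\ge\kappa_0$ and $0\le H\le C_{\max}\kappa^{-1}$, then $\mu_1(\kappa,H)<0$.
   Context: $\Omega\subset\mathbb R^2$ is a bounded, open, simply connected set with smooth boundary, $\nu$ the unit interior normal, $B_0\in C^\infty(\overline\Omega)$ real, $\mathbf F\in H^1(\Omega;\mathbb R^2)$ the unique field with $\operatorname{div}\mathbf F=0$, $\mathbf F\cdot\nu|_{\partial\Omega}=0$, $\operatorname{curl}\mathbf F=B_0$. $\mu_1(\kappa,H)=\inf_{\phi\in H^1(\Omega)\setminus\{0\}}\frac{\int_\Omega(|(\nabla-i\kappa H\mathbf F)\phi|^2-\kappa^2a(x)|\phi|^2)dx}{\|\phi\|^2_{L^2(\Omega)}}$. *)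

theory Defs
  imports "HOL-Analysis.Analysis"
begin

definition pd :: "(real^2 \<Rightarrow> real) \<Rightarrow> 2 \<Rightarrow> real^2 \<Rightarrow> real" where
  "pd f i x = frechet_derivative f (at x) (axis i 1)"

fun Ck :: "nat \<Rightarrow> (real^2 \<Rightarrow> real) \<Rightarrow> bool" where
  "Ck 0 f = continuous_on UNIV f"
| "Ck (Suc k) f = ((\<forall>x. f differentiable (at x)) \<and> (\<forall>i. Ck k (pd f i)))"

definition smooth :: "(real^2 \<Rightarrow> real) \<Rightarrow> bool" where
  "smooth f = (\<forall>k. Ck k f)"

definition C1_closure :: "(real^2) set \<Rightarrow> (real^2 \<Rightarrow> real) \<Rightarrow> bool" where
  "C1_closure \<Omega> f = (\<exists>g. Ck 1 g \<and> (\<forall>x\<in>closure \<Omega>. f x = g x))"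

definition Cinf_closure :: "(real^2) set \<Rightarrow> (real^2 \<Rightarrow> real) \<Rightarrow> bool" where
  "Cinf_closure \<Omega> f = (\<exists>g. smooth g \<and> (\<forall>x\<in>closure \<Omega>. f x = g x))"

definition smooth_boundary :: "(real^2) set \<Rightarrow> bool" where
  "smooth_boundary \<Omega> = (\<exists>\<rho>. smooth \<rho> \<and> \<Omega> = {x. \<rho> x < 0} \<and>
        (\<forall>x. \<rho> x = 0 \<longrightarrow> (\<exists>i. pd \<rho> i x \<noteq> 0)))"

definition test_fun :: "(real^2) set \<Rightarrow> (real^2 \<Rightarrow> real) \<Rightarrow> bool" where
  "test_fun \<Omega> \<psi> = (smooth \<psi> \<and> (\<exists>K. compact K \<and> K \<subseteq> \<Omega> \<and> (\<forall>x. x \<notin> K \<longrightarrow> \<psi> x = 0)))"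

definition L2 :: "(real^2) set \<Rightarrow> (real^2 \<Rightarrow> 'b::{banach,second_countable_topology}) \<Rightarrow> bool" where
  "L2 \<Omega> f = (f \<in> borel_measurable (lebesgue_on \<Omega>) \<and>
              integrable (lebesgue_on \<Omega>) (\<lambda>x. (norm (f x))\<^sup>2))"

definition weak_deriv :: "(real^2) set \<Rightarrow> (real^2 \<Rightarrow> 'b::{banach,second_countable_topology}) \<Rightarrow> 2 \<Rightarrow> (real^2 \<Rightarrow> 'b) \<Rightarrow> bool" where
  "weak_deriv \<Omega> f i g = (\<forall>\<psi>. test_fun \<Omega> \<psi> \<longrightarrow>
      integral\<^sup>L (lebesgue_on \<Omega>) (\<lambda>x. pd \<psi> i x *\<^sub>R f x)
        = - integral\<^sup>L (lebesgue_on \<Omega>) (\<lambda>x. \<psi> x *\<^sub>R g x))"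

definition H1 :: "(real^2) set \<Rightarrow> (real^2 \<Rightarrow> 'b::{banach,second_countable_topology}) \<Rightarrow> (2 \<Rightarrow> real^2 \<Rightarrow> 'b) \<Rightarrow> bool" where
  "H1 \<Omega> f g = (L2 \<Omega> f \<and> (\<forall>i. L2 \<Omega> (g i) \<and> weak_deriv \<Omega> f i (g i)))"

text \<open>F is the vector field of the paper: F in H^1(Omega;R^2) (with weak Jacobian DF i j = d_i F_j),
  div F = 0, curl F = B0 in Omega, and F.nu = 0 on the boundary, the latter in the weak
  (normal trace) sense: integral over Omega of F . grad psi vanishes for all smooth psi up to the boundary.\<close>
definition is_mag_potential :: "(real^2) set \<Rightarrow> (real^2 \<Rightarrow> real) \<Rightarrow> (real^2 \<Rightarrow> real^2) \<Rightarrow> bool" where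
  "is_mag_potential \<Omega> B0 F = (\<exists>DF :: 2 \<Rightarrow> 2 \<Rightarrow> real^2 \<Rightarrow> real.
      (\<forall>j. H1 \<Omega> (\<lambda>x. F x $ j) (\<lambda>i. DF i j)) \<and>
      (AE x in lebesgue_on \<Omega>. DF 1 1 x + DF 2 2 x = 0) \<and>
      (AE x in lebesgue_on \<Omega>. DF 1 2 x - DF 2 1 x = B0 x) \<and>
      (\<forall>\<psi>. smooth \<psi> \<longrightarrow>
         integral\<^sup>L (lebesgue_on \<Omega>) (\<lambda>x. F x $ 1 * pd \<psi> 1 x + F x $ 2 * pd \<psi> 2 x) = 0))"

definition rayleigh :: "(real^2) set \<Rightarrow> (real^2 \<Rightarrow> real^2) \<Rightarrow> (real^2 \<Rightarrow> real) \<Rightarrow> real \<Rightarrow> real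
     \<Rightarrow> (real^2 \<Rightarrow> complex) \<Rightarrow> (2 \<Rightarrow> real^2 \<Rightarrow> complex) \<Rightarrow> real" where
  "rayleigh \<Omega> F a \<kappa> H \<phi> g =
     integral\<^sup>L (lebesgue_on \<Omega>)
       (\<lambda>x. (\<Sum>j\<in>UNIV. (cmod (g j x - \<i> * complex_of_real (\<kappa> * H * F x $ j) * \<phi> x))\<^sup>2)
            - \<kappa>\<^sup>2 * a x * (cmod (\<phi> x))\<^sup>2)
     / integral\<^sup>L (lebesgue_on \<Omega>) (\<lambda>x. (cmod (\<phi> x))\<^sup>2)"

definition mu1 :: "(real^2) set \<Rightarrow> (real^2 \<Rightarrow> real^2) \<Rightarrow> (real^2 \<Rightarrow> real) \<Rightarrow> real \<Rightarrow> real \<Rightarrow> real" where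
  "mu1 \<Omega> F a \<kappa> H = Inf {rayleigh \<Omega> F a \<kappa> H \<phi> g | \<phi> g.
       H1 \<Omega> \<phi> g \<and> integral\<^sup>L (lebesgue_on \<Omega>) (\<lambda>x. (cmod (\<phi> x))\<^sup>2) \<noteq> 0}"

end

theory Submission
  imports Defs
begin

text \<open>
  Test the Rayleigh quotient with a real-valued \<open>C\<^sup>1\<close> bump \<open>\<phi>\<close> supported in a small ball
  inside \<open>\<Omega>\<close> on which \<open>a \<ge> c\<^sub>0 > 0\<close>. Since \<open>\<phi>\<close> is real, the magnetic field only enters through
  \<open>(\<kappa>H)\<^sup>2 \<integral> |F|\<^sup>2 \<phi>\<^sup>2 \<le> C\<^sub>m\<^sub>a\<^sub>x\<^sup>2 \<integral> |F|\<^sup>2 \<phi>\<^sup>2\<close>, so the numerator is at most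
  \<open>\<integral> |\<nabla>\<phi>|\<^sup>2 + C\<^sub>m\<^sub>a\<^sub>x\<^sup>2 \<integral> |F|\<^sup>2 \<phi>\<^sup>2 - \<kappa>\<^sup>2 \<integral> a \<phi>\<^sup>2\<close>, which is negative for large \<open>\<kappa>\<close>.
  As \<open>a\<close> is bounded above, all Rayleigh quotients are \<open>\<ge> -\<kappa>\<^sup>2 sup a\<close>, so \<open>\<mu>\<^sub>1\<close> is a genuine
  infimum and lies below the quotient of \<open>\<phi>\<close>.
\<close>

lemma Ck_1_iff: "Ck 1 g \<longleftrightarrow> (\<forall>x. g differentiable (at x)) \<and> (\<forall>i. continuous_on UNIV (pd g i))"
  by (simp only: One_nat_def Ck.simps)

lemma Ck_1_continuous: "Ck 1 g \<Longrightarrow> continuous_on UNIV g"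
  by (simp add: Ck_1_iff continuous_at_imp_continuous_on differentiable_imp_continuous_within)

lemma has_real_derivative_along_axis:
  fixes h :: "real^2 \<Rightarrow> real"
  assumes "h differentiable (at (x + s *\<^sub>R axis i 1))"
  shows "((\<lambda>s. h (x + s *\<^sub>R axis i 1)) has_real_derivative pd h i (x + s *\<^sub>R axis i 1)) (at s)"
proof -
  let ?y = "x + s *\<^sub>R axis i (1::real)"
  have D: "(h has_derivative frechet_derivative h (at ?y)) (at ?y)"
    using assms frechet_derivative_works by blast
  have L: "((\<lambda>s. x + s *\<^sub>R axis i (1::real)) has_derivative (\<lambda>t. t *\<^sub>R axis i 1)) (at s)"
    by (auto intro!: derivative_eq_intros)
  have "linear (frechet_derivative h (at ?y))"
    using D has_derivative_linear by blast
  then have "(\<lambda>t. frechet_derivative h (at ?y) (t *\<^sub>R axis i 1)) = (*) (pd h i ?y)"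
    by (auto simp: pd_def linear_scale)
  with diff_chain_at[OF L D] show ?thesis
    by (simp add: has_field_derivative_def o_def)
qed

lemma pd_eq_0_outside_support:
  fixes h :: "real^2 \<Rightarrow> real"
  assumes "closed K" "x \<notin> K" "\<And>y. y \<notin> K \<Longrightarrow> h y = 0"
  shows "pd h i x = 0"
proof -
  have "((\<lambda>_. 0) has_derivative (\<lambda>_. 0)) (at x)"
    by simp
  then have "(h has_derivative (\<lambda>_. 0)) (at x)"
    by (rule has_derivative_transform_within_open[where s = "- K"]) (use assms in auto)
  then show ?thesis
    unfolding pd_def by (simp add: frechet_derivative_at[symmetric])
qed

lemma pd_mult:
  fixes f g :: "real^2 \<Rightarrow> real"
  assumes "f differentiable (at x)" "g differentiable (at x)"
  shows "pd (\<lambda>x. f x * g x) i x = pd f i x * g x + f x * pd g i x"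
    and "(\<lambda>x. f x * g x) differentiable (at x)"
proof -
  have P: "((\<lambda>x. f x * g x) has_derivative
      (\<lambda>h. f x * frechet_derivative g (at x) h + frechet_derivative f (at x) h * g x)) (at x)"
    using assms by (intro has_derivative_mult) (simp_all add: frechet_derivative_works)
  then show "(\<lambda>x. f x * g x) differentiable (at x)"
    by (rule differentiableI)
  show "pd (\<lambda>x. f x * g x) i x = pd f i x * g x + f x * pd g i x"
    unfolding pd_def frechet_derivative_at[OF P, symmetric] by simp
qed

lemma abs_difference_quotient_le:
  fixes h :: "real^2 \<Rightarrow> real"
  assumes "\<And>y. h differentiable (at y)" "0 < t"
    and "\<And>s. 0 < s \<Longrightarrow> s < t \<Longrightarrow> \<bar>pd h i (x + s *\<^sub>R axis i 1)\<bar> \<le> M"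
  shows "\<bar>(h (x + t *\<^sub>R axis i 1) - h x) / t\<bar> \<le> M"
proof -
  have "\<exists>s>0. s < t \<and>
      h (x + t *\<^sub>R axis i 1) - h (x + 0 *\<^sub>R axis i 1) = (t - 0) * pd h i (x + s *\<^sub>R axis i 1)"
    by (rule MVT2[OF \<open>0 < t\<close>]) (rule has_real_derivative_along_axis[OF assms(1)])
  then obtain s where s: "0 < s" "s < t"
    and "h (x + t *\<^sub>R axis i 1) - h x = t * pd h i (x + s *\<^sub>R axis i 1)"
    by auto
  then show ?thesis
    using assms(2) assms(3)[OF s] by (simp add: abs_mult)
qed

lemma integrable_compact_support:
  fixes f :: "'a::euclidean_space \<Rightarrow> 'b::{banach,second_countable_topology}"
  assumes "continuous_on UNIV f" "compact K" "\<And>x. x \<notin> K \<Longrightarrow> f x = 0"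
  shows "integrable lborel f"
proof -
  have "integrable lborel (\<lambda>x. indicator K x *\<^sub>R f x)"
    by (rule borel_integrable_compact[OF assms(2) continuous_on_subset[OF assms(1)]]) auto
  moreover have "(\<lambda>x. indicator K x *\<^sub>R f x) = f"
    using assms(3) by (force simp: indicator_def)
  ultimately show ?thesis
    by simp
qed

lemma lborel_integral_translate:
  fixes h :: "'a::euclidean_space \<Rightarrow> real"
  assumes "integrable lborel h"
  shows "integrable lborel (\<lambda>x. h (x + c))" and "integral\<^sup>L lborel (\<lambda>x. h (x + c)) = integral\<^sup>L lborel h"
proof -
  have m: "(+) c \<in> measurable lborel borel"
    by simp
  have h: "h \<in> borel_measurable borel"
    using borel_measurable_integrable[OF assms] by simp
  show "integrable lborel (\<lambda>x. h (x + c))"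
    using assms integrable_distr_eq[OF m h] by (simp add: lborel_distr_plus add.commute)
  show "integral\<^sup>L lborel (\<lambda>x. h (x + c)) = integral\<^sup>L lborel h"
    using integral_distr[OF m h] by (simp add: lborel_distr_plus add.commute)
qed

lemma difference_quotient_tendsto_pd:
  fixes h :: "real^2 \<Rightarrow> real"
  assumes "h differentiable (at x)" and t: "filterlim t (at 0) sequentially"
  shows "(\<lambda>n. (h (x + t n *\<^sub>R axis i 1) - h x) / t n) \<longlonglongrightarrow> pd h i x"
proof -
  have "((\<lambda>u. h (x + u *\<^sub>R axis i 1)) has_real_derivative pd h i x) (at 0)"
    using has_real_derivative_along_axis[of h x 0 i] assms(1) by simp
  then have "((\<lambda>u. (h (x + u *\<^sub>R axis i 1) - h x) / u) \<longlongrightarrow> pd h i x) (at 0)"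
    by (simp add: has_field_derivative_iff)
  from filterlim_compose[OF this t] show ?thesis .
qed

lemma abs_difference_quotient_le_indicator:
  fixes h :: "real^2 \<Rightarrow> real"
  assumes dif: "\<And>y. h differentiable (at y)"
    and R: "\<And>x. x \<in> K \<Longrightarrow> norm x \<le> R" and supp: "\<And>x. x \<notin> K \<Longrightarrow> h x = 0"
    and M: "\<And>y. y \<in> cball 0 (R + 2) \<Longrightarrow> \<bar>pd h i y\<bar> \<le> M"
    and t: "0 < t" "t \<le> 1"
  shows "\<bar>(h (x + t *\<^sub>R axis i 1) - h x) / t\<bar> \<le> M * indicator (cball 0 (R + 1)) x"
proof (cases "x \<in> cball 0 (R + 1)")
  case True
  have "\<bar>pd h i (x + s *\<^sub>R axis i 1)\<bar> \<le> M" if "0 < s" "s < t" for s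
  proof (rule M)
    have "norm (x + s *\<^sub>R axis i 1) \<le> norm x + s"
      using norm_triangle_ineq[of x "s *\<^sub>R axis i 1"] that by simp
    then show "x + s *\<^sub>R axis i 1 \<in> cball 0 (R + 2)"
      using True that t by simp
  qed
  then show ?thesis
    using abs_difference_quotient_le[OF dif t(1)] True by simp
next
  case False
  then have "norm x > R + 1"
    by simp
  moreover have "norm x \<le> norm (x + t *\<^sub>R axis i 1) + t"
    using norm_triangle_ineq4[of "x + t *\<^sub>R axis i 1" "t *\<^sub>R axis i 1"] t by simp
  ultimately have "x \<notin> K" "x + t *\<^sub>R axis i 1 \<notin> K"
    using R t by force+
  then show ?thesis
    using False by (simp add: supp)
qed

text \<open>Translation invariance makes every difference quotient integrate to \<open>0\<close>; they converge
  dominatedly to \<open>pd h i\<close>.\<close>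
lemma integral_pd_eq_0:
  fixes h :: "real^2 \<Rightarrow> real"
  assumes h: "Ck 1 h" and K: "compact K" and supp: "\<And>x. x \<notin> K \<Longrightarrow> h x = 0"
  shows "integral\<^sup>L lborel (pd h i) = 0"
proof -
  have dif: "\<And>x. h differentiable (at x)" and cont: "continuous_on UNIV (pd h i)"
    using h by (auto simp: Ck_1_iff)
  obtain R where R: "\<And>x. x \<in> K \<Longrightarrow> norm x \<le> R"
    using compact_imp_bounded[OF K] unfolding bounded_iff by blast
  have "bounded (pd h i ` cball 0 (R + 2))"
    by (intro compact_imp_bounded compact_continuous_image continuous_on_subset[OF cont]) auto
  then obtain M where M: "\<And>y. y \<in> cball 0 (R + 2) \<Longrightarrow> \<bar>pd h i y\<bar> \<le> M"
    unfolding bounded_iff by fastforce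
  have hint: "integrable lborel h"
    by (rule integrable_compact_support[OF Ck_1_continuous[OF h] K supp])
  define t :: "nat \<Rightarrow> real" where "t n = 1 / Suc n" for n
  have t: "0 < t n" "t n \<le> 1" for n
    by (auto simp: t_def)
  have t_lim: "filterlim t (at 0) sequentially"
    unfolding filterlim_at t_def
    using LIMSEQ_Suc[OF lim_const_over_n[of 1]] by (auto simp: less_imp_neq[symmetric])
  define q where "q n x = (h (x + t n *\<^sub>R axis i 1) - h x) / t n" for n x
  have "integral\<^sup>L lborel (q n) = 0" for n
    unfolding q_def integral_divide_zero
    using lborel_integral_translate[OF hint, of "t n *\<^sub>R axis i 1"] hint by simp
  moreover have "(\<lambda>n. integral\<^sup>L lborel (q n)) \<longlonglongrightarrow> integral\<^sup>L lborel (pd h i)"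
  proof (rule integral_dominated_convergence[where w = "\<lambda>x. M * indicator (cball 0 (R + 1)) x"])
    show "pd h i \<in> borel_measurable lborel"
      using cont by (simp add: borel_measurable_continuous_onI)
    have "continuous_on UNIV (q n)" for n
      unfolding q_def using t(1)[of n] Ck_1_continuous[OF h]
      by (auto intro!: continuous_intros continuous_on_compose2[of UNIV h])
    then show "q n \<in> borel_measurable lborel" for n
      by (simp add: borel_measurable_continuous_onI)
    show "integrable lborel (\<lambda>x. M * indicator (cball 0 (R + 1)) x)"
      by (intro integrable_mult_right integrable_real_indicator emeasure_compact_finite) auto
    show "AE x in lborel. (\<lambda>n. q n x) \<longlonglongrightarrow> pd h i x"
      unfolding q_def using difference_quotient_tendsto_pd[OF dif t_lim] by simp
    show "AE x in lborel. norm (q n x) \<le> M * indicator (cball 0 (R + 1)) x" for n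
      unfolding q_def using abs_difference_quotient_le_indicator[OF dif R supp M t] by simp
  qed
  ultimately show ?thesis
    by (simp add: LIMSEQ_const_iff)
qed

lemma integral_pd_mult_by_parts:
  fixes \<psi> \<phi> :: "real^2 \<Rightarrow> real"
  assumes \<psi>: "Ck 1 \<psi>" and \<phi>: "Ck 1 \<phi>"
    and K: "compact K" and supp: "\<And>x. x \<notin> K \<Longrightarrow> \<psi> x = 0"
  shows "integral\<^sup>L lborel (\<lambda>x. pd \<psi> i x * \<phi> x) = - integral\<^sup>L lborel (\<lambda>x. \<psi> x * pd \<phi> i x)"
proof -
  have d: "\<And>x. \<psi> differentiable (at x)" "\<And>x. \<phi> differentiable (at x)"
    and c: "continuous_on UNIV (pd \<psi> i)" "continuous_on UNIV (pd \<phi> i)"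
    using \<psi> \<phi> by (auto simp: Ck_1_iff)
  have c': "continuous_on UNIV \<psi>" "continuous_on UNIV \<phi>"
    using \<psi> \<phi> by (auto intro: Ck_1_continuous)
  have pd_supp: "pd \<psi> i x = 0" if "x \<notin> K" for x
    using pd_eq_0_outside_support[OF compact_imp_closed[OF K] that supp] .
  have eq: "\<And>i. pd (\<lambda>x. \<psi> x * \<phi> x) i = (\<lambda>x. pd \<psi> i x * \<phi> x + \<psi> x * pd \<phi> i x)"
    using pd_mult(1)[OF d] by blast
  have I1: "integrable lborel (\<lambda>x. pd \<psi> i x * \<phi> x)"
    by (rule integrable_compact_support[OF _ K]) (auto intro!: continuous_intros c c' simp: pd_supp)
  have I2: "integrable lborel (\<lambda>x. \<psi> x * pd \<phi> i x)"
    by (rule integrable_compact_support[OF _ K]) (auto intro!: continuous_intros c c' simp: supp)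
  have "Ck 1 (\<lambda>x. \<psi> x * \<phi> x)"
    using \<psi> \<phi> pd_mult(2)[OF d] unfolding Ck_1_iff eq by (auto intro!: continuous_intros c')
  then have "integral\<^sup>L lborel (pd (\<lambda>x. \<psi> x * \<phi> x) i) = 0"
    by (rule integral_pd_eq_0[OF _ K]) (simp add: supp)
  then show ?thesis
    unfolding eq using I1 I2 by simp
qed

lemma integral_lebesgue_on_compact_support:
  fixes f :: "'a::euclidean_space \<Rightarrow> real"
  assumes \<Omega>: "\<Omega> \<in> sets lebesgue" and f: "continuous_on UNIV f"
    and K: "compact K" "K \<subseteq> \<Omega>" and supp: "\<And>x. x \<notin> K \<Longrightarrow> f x = 0"
  shows "integrable (lebesgue_on \<Omega>) f" and "integral\<^sup>L (lebesgue_on \<Omega>) f = integral\<^sup>L lborel f"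
proof -
  have ind: "(\<lambda>x. indicator \<Omega> x *\<^sub>R f x) = f"
    using K(2) supp by (force simp: indicator_def)
  have \<Omega>': "\<Omega> \<inter> space lebesgue \<in> sets lebesgue"
    using \<Omega> by simp
  have m: "f \<in> borel_measurable lborel"
    using f by (simp add: borel_measurable_continuous_onI)
  have "integrable lborel f"
    by (rule integrable_compact_support[OF f K(1) supp])
  then show "integrable (lebesgue_on \<Omega>) f"
    unfolding integrable_restrict_space[OF \<Omega>'] ind using integrable_completion[OF m] by simp
  show "integral\<^sup>L (lebesgue_on \<Omega>) f = integral\<^sup>L lborel f"
    unfolding integral_restrict_space[OF \<Omega>'] ind using integral_completion[OF m] by simp
qed

lemma L2_of_real_compact_support:
  fixes f :: "real^2 \<Rightarrow> real"
  assumes \<Omega>: "\<Omega> \<in> sets lebesgue" and f: "continuous_on UNIV f"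
    and K: "compact K" "K \<subseteq> \<Omega>" and supp: "\<And>x. x \<notin> K \<Longrightarrow> f x = 0"
  shows "L2 \<Omega> (\<lambda>x. complex_of_real (f x))"
  unfolding L2_def
proof
  show "(\<lambda>x. complex_of_real (f x)) \<in> borel_measurable (lebesgue_on \<Omega>)"
    using f \<Omega> by (intro continuous_imp_measurable_on_sets_lebesgue continuous_intros)
      (auto intro: continuous_on_subset)
  show "integrable (lebesgue_on \<Omega>) (\<lambda>x. (norm (complex_of_real (f x)))\<^sup>2)"
    using integral_lebesgue_on_compact_support(1)[OF \<Omega> _ K, of "\<lambda>x. (f x)\<^sup>2"] f supp
    by (simp add: continuous_intros)
qed

lemma weak_deriv_of_real_C1:
  fixes \<phi> :: "real^2 \<Rightarrow> real"
  assumes \<Omega>: "\<Omega> \<in> sets lebesgue" and \<phi>: "Ck 1 \<phi>"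
  shows "weak_deriv \<Omega> (\<lambda>x. complex_of_real (\<phi> x)) j (\<lambda>x. complex_of_real (pd \<phi> j x))"
  unfolding weak_deriv_def
proof (intro allI impI)
  fix \<psi> assume "test_fun \<Omega> \<psi>"
  then obtain K where \<psi>: "Ck 1 \<psi>" "compact K" "K \<subseteq> \<Omega>" "\<And>x. x \<notin> K \<Longrightarrow> \<psi> x = 0"
    unfolding test_fun_def smooth_def by blast
  have c: "continuous_on UNIV \<phi>" "continuous_on UNIV (pd \<phi> j)"
    "continuous_on UNIV \<psi>" "continuous_on UNIV (pd \<psi> j)"
    using \<phi> \<psi>(1) by (auto simp: Ck_1_iff intro: Ck_1_continuous)
  have pd\<psi>_supp: "pd \<psi> j x = 0" if "x \<notin> K" for x
    using pd_eq_0_outside_support[OF compact_imp_closed[OF \<psi>(2)] that \<psi>(4)] .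
  have "integral\<^sup>L (lebesgue_on \<Omega>) (\<lambda>x. pd \<psi> j x * \<phi> x) = integral\<^sup>L lborel (\<lambda>x. pd \<psi> j x * \<phi> x)"
    by (rule integral_lebesgue_on_compact_support(2)[OF \<Omega> _ \<psi>(2,3)])
      (auto intro!: continuous_intros c simp: pd\<psi>_supp)
  also have "\<dots> = - integral\<^sup>L lborel (\<lambda>x. \<psi> x * pd \<phi> j x)"
    by (rule integral_pd_mult_by_parts[OF \<psi>(1) \<phi> \<psi>(2,4)])
  also have "integral\<^sup>L lborel (\<lambda>x. \<psi> x * pd \<phi> j x) = integral\<^sup>L (lebesgue_on \<Omega>) (\<lambda>x. \<psi> x * pd \<phi> j x)"
    by (rule integral_lebesgue_on_compact_support(2)[OF \<Omega> _ \<psi>(2,3), symmetric])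
      (auto intro!: continuous_intros c simp: \<psi>(4))
  finally show "integral\<^sup>L (lebesgue_on \<Omega>) (\<lambda>x. pd \<psi> j x *\<^sub>R complex_of_real (\<phi> x))
      = - integral\<^sup>L (lebesgue_on \<Omega>) (\<lambda>x. \<psi> x *\<^sub>R complex_of_real (pd \<phi> j x))"
    by (simp add: scaleR_conv_of_real integral_complex_of_real flip: of_real_mult)
qed

lemma H1_of_real_compact_support:
  fixes \<phi> :: "real^2 \<Rightarrow> real"
  assumes \<Omega>: "\<Omega> \<in> sets lebesgue" and \<phi>: "Ck 1 \<phi>"
    and K: "compact K" "K \<subseteq> \<Omega>" and supp: "\<And>x. x \<notin> K \<Longrightarrow> \<phi> x = 0"
  shows "H1 \<Omega> (\<lambda>x. complex_of_real (\<phi> x)) (\<lambda>j x. complex_of_real (pd \<phi> j x))"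
proof -
  have "continuous_on UNIV \<phi>" "\<And>j. continuous_on UNIV (pd \<phi> j)"
    using \<phi> by (auto simp: Ck_1_iff intro: Ck_1_continuous)
  moreover have "pd \<phi> j x = 0" if "x \<notin> K" for j x
    using pd_eq_0_outside_support[OF compact_imp_closed[OF K(1)] that supp] .
  ultimately show ?thesis
    unfolding H1_def using L2_of_real_compact_support[OF \<Omega> _ K] supp weak_deriv_of_real_C1[OF \<Omega> \<phi>]
    by blast
qed

definition ramp2 :: "real \<Rightarrow> real" where
  "ramp2 s = (max 0 s)\<^sup>2"

lemma ramp2_has_real_derivative: "(ramp2 has_real_derivative 2 * max 0 s) (at s)"
proof (cases s "0::real" rule: linorder_cases)
  case less
  have "((\<lambda>_. 0) has_real_derivative 0) (at s)"
    by simp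
  then have "(ramp2 has_real_derivative 0) (at s)"
    by (rule has_field_derivative_transform_within_open[where S = "{..<0}"])
      (use less in \<open>auto simp: ramp2_def\<close>)
  then show ?thesis
    using less by simp
next
  case equal
  have "((\<lambda>y. max 0 y) \<longlongrightarrow> max 0 0) (at (0::real))"
    by (intro tendsto_intros)
  then have "((\<lambda>y. max 0 y) \<longlongrightarrow> 0) (at (0::real))"
    by simp
  then have "((\<lambda>y. (ramp2 y - ramp2 0) / (y - 0)) \<longlongrightarrow> 0) (at 0)"
    by (rule Lim_transform_eventually)
      (auto simp: eventually_at_filter ramp2_def power2_eq_square max_def)
  then show ?thesis
    using equal by (simp add: has_field_derivative_iff)
next
  case greater
  have "((\<lambda>y. y\<^sup>2) has_real_derivative 2 * s) (at s)"
    by (auto intro!: derivative_eq_intros)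
  then have "(ramp2 has_real_derivative 2 * s) (at s)"
    by (rule has_field_derivative_transform_within_open[where S = "{0<..}"])
      (use greater in \<open>auto simp: ramp2_def\<close>)
  then show ?thesis
    using greater by simp
qed

text \<open>Only \<open>C\<^sup>1\<close>, which is all an \<open>H\<^sup>1\<close> test function needs.\<close>
definition bump :: "real^2 \<Rightarrow> real \<Rightarrow> real^2 \<Rightarrow> real" where
  "bump c r x = ramp2 (r\<^sup>2 - (x - c) \<bullet> (x - c))"

lemma bump_has_derivative:
  "(bump c r has_derivative (\<lambda>h. - 4 * max 0 (r\<^sup>2 - (x - c) \<bullet> (x - c)) * ((x - c) \<bullet> h))) (at x)"
proof -
  have "((\<lambda>x. r\<^sup>2 - (x - c) \<bullet> (x - c)) has_derivative (\<lambda>h. - 2 * ((x - c) \<bullet> h))) (at x)"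
    by (auto intro!: derivative_eq_intros simp: inner_commute algebra_simps)
  from has_derivative_compose[OF this ramp2_has_real_derivative[unfolded has_field_derivative_def]]
  show ?thesis
    unfolding bump_def by (simp add: mult.assoc)
qed

lemma Ck_1_bump: "Ck 1 (bump c r)"
proof -
  have "pd (bump c r) i = (\<lambda>x. - 4 * max 0 (r\<^sup>2 - (x - c) \<bullet> (x - c)) * (x - c) $ i)" for i
    unfolding pd_def frechet_derivative_at[OF bump_has_derivative, symmetric]
    by (simp add: inner_axis)
  then show ?thesis
    unfolding Ck_1_iff using differentiableI[OF bump_has_derivative]
    by (auto intro!: continuous_intros)
qed

lemma bump_eq_0: "0 \<le> r \<Longrightarrow> x \<notin> cball c r \<Longrightarrow> bump c r x = 0"
proof -
  assume "0 \<le> r" "x \<notin> cball c r"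
  then have "r\<^sup>2 \<le> (norm (x - c))\<^sup>2"
    by (intro power_mono) (auto simp: dist_norm norm_minus_commute)
  then show ?thesis
    by (simp add: bump_def ramp2_def power2_norm_eq_inner)
qed

lemma bump_nonneg: "0 \<le> bump c r x"
  by (simp add: bump_def ramp2_def)

lemma bump_le: "bump c r x \<le> r ^ 4"
proof -
  have "max 0 (r\<^sup>2 - (x - c) \<bullet> (x - c)) \<le> r\<^sup>2"
    by simp
  then have "ramp2 (r\<^sup>2 - (x - c) \<bullet> (x - c)) \<le> (r\<^sup>2)\<^sup>2"
    unfolding ramp2_def by (intro power_mono) auto
  then show ?thesis
    by (simp add: bump_def)
qed

lemma bump_ge: "x \<in> ball c (r / 2) \<Longrightarrow> (r\<^sup>2 / 2)\<^sup>2 \<le> bump c r x"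
proof -
  assume "x \<in> ball c (r / 2)"
  then have "(norm (x - c))\<^sup>2 \<le> (r / 2)\<^sup>2"
    by (intro power_mono) (auto simp: dist_norm norm_minus_commute)
  then have "4 * ((x - c) \<bullet> (x - c)) \<le> r\<^sup>2"
    by (simp add: power2_norm_eq_inner power_divide)
  then have "r\<^sup>2 / 2 \<le> r\<^sup>2 - (x - c) \<bullet> (x - c)"
    using inner_ge_zero[of "x - c"] by linarith
  then have half: "r\<^sup>2 / 2 \<le> max 0 (r\<^sup>2 - (x - c) \<bullet> (x - c))"
    by (rule max.coboundedI2)
  show ?thesis
    unfolding bump_def ramp2_def by (rule power_mono[OF half]) simp
qed

lemma integrable_L2_mult_bounded:
  fixes f g :: "real^2 \<Rightarrow> real"
  assumes f: "L2 \<Omega> f" and g: "g \<in> borel_measurable (lebesgue_on \<Omega>)" "\<And>x. \<bar>g x\<bar> \<le> C"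
  shows "integrable (lebesgue_on \<Omega>) (\<lambda>x. (f x * g x)\<^sup>2)"
proof (rule Bochner_Integration.integrable_bound)
  show "integrable (lebesgue_on \<Omega>) (\<lambda>x. C\<^sup>2 * (norm (f x))\<^sup>2)"
    using f unfolding L2_def by simp
  show "(\<lambda>x. (f x * g x)\<^sup>2) \<in> borel_measurable (lebesgue_on \<Omega>)"
    using f g(1) unfolding L2_def by (auto intro!: borel_measurable_power borel_measurable_times)
  have "(f x * g x)\<^sup>2 \<le> C\<^sup>2 * (f x)\<^sup>2" for x
    using mult_right_mono[OF power_mono[OF g(2)[of x] abs_ge_zero, of 2] zero_le_power2[of "f x"]]
    by (simp add: power_mult_distrib mult.commute)
  then show "AE x in lebesgue_on \<Omega>. norm ((f x * g x)\<^sup>2) \<le> norm (C\<^sup>2 * (norm (f x))\<^sup>2)"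
    by (intro AE_I2) simp
qed

lemma integral_pos_of_ball:
  fixes f :: "'a::euclidean_space \<Rightarrow> real"
  assumes \<Omega>: "\<Omega> \<in> sets lebesgue" "finite_measure (lebesgue_on \<Omega>)"
    and f: "integrable (lebesgue_on \<Omega>) f"
    and ball: "ball q s \<subseteq> \<Omega>" "0 < s" and m: "0 < m"
    and f_ge: "\<And>x. x \<in> \<Omega> \<Longrightarrow> m * indicator (ball q s) x \<le> f x"
  shows "0 < integral\<^sup>L (lebesgue_on \<Omega>) f"
proof -
  have "ball q s \<in> sets (lebesgue_on \<Omega>)"
    using ball \<Omega>(1) by (simp add: sets_restrict_space_iff)
  then have "integrable (lebesgue_on \<Omega>) (indicator (ball q s) :: 'a \<Rightarrow> real)"
    using finite_measure.emeasure_finite[OF \<Omega>(2)] by (simp add: less_top)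
  then have "integral\<^sup>L (lebesgue_on \<Omega>) (\<lambda>x. m * indicator (ball q s) x) \<le> integral\<^sup>L (lebesgue_on \<Omega>) f"
    using f f_ge by (intro integral_mono) auto
  moreover have "measure (lebesgue_on \<Omega>) (ball q s) = measure lebesgue (ball q s)"
    by (rule measure_restrict_space) (use \<Omega>(1) ball in auto)
  then have "integral\<^sup>L (lebesgue_on \<Omega>) (\<lambda>x. m * indicator (ball q s) x) = m * measure lebesgue (ball q s)"
    using ball by (simp add: Int_absorb2)
  moreover have "0 < m * measure lebesgue (ball q s)"
    using m ball by simp
  ultimately show ?thesis
    by linarith
qed

lemma integral_weighted_bump_sq_pos:
  assumes \<Omega>: "\<Omega> \<in> sets lebesgue" "finite_measure (lebesgue_on \<Omega>)"
    and r: "0 < r" "cball q r \<subseteq> \<Omega>"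
    and w: "continuous_on UNIV w" "0 < c" "\<And>y. y \<in> cball q r \<Longrightarrow> c \<le> w y"
  shows "integrable (lebesgue_on \<Omega>) (\<lambda>x. w x * (bump q r x)\<^sup>2)"
    and "0 < integral\<^sup>L (lebesgue_on \<Omega>) (\<lambda>x. w x * (bump q r x)\<^sup>2)"
proof -
  have supp: "\<And>x. x \<notin> cball q r \<Longrightarrow> bump q r x = 0"
    using r(1) by (simp add: bump_eq_0)
  show int: "integrable (lebesgue_on \<Omega>) (\<lambda>x. w x * (bump q r x)\<^sup>2)"
    using Ck_1_continuous[OF Ck_1_bump] w(1) supp
    by (intro integral_lebesgue_on_compact_support(1)[OF \<Omega>(1) _ compact_cball r(2)])
      (auto intro!: continuous_intros)
  define m where "m = c * ((r\<^sup>2 / 2)\<^sup>2)\<^sup>2"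
  have "m * indicator (ball q (r / 2)) x \<le> w x * (bump q r x)\<^sup>2" for x
  proof (cases "x \<in> ball q (r / 2)")
    case True
    then have "((r\<^sup>2 / 2)\<^sup>2)\<^sup>2 \<le> (bump q r x)\<^sup>2"
      by (intro power_mono bump_ge) auto
    moreover have "c \<le> w x"
      using True r(1) by (intro w(3)) auto
    ultimately show ?thesis
      using True w(2) by (simp add: m_def mult_mono)
  next
    case False
    have "0 \<le> w x * (bump q r x)\<^sup>2"
      using w(2) w(3)[of x] supp[of x] by (cases "x \<in> cball q r") auto
    then show ?thesis
      using False by simp
  qed
  then show "0 < integral\<^sup>L (lebesgue_on \<Omega>) (\<lambda>x. w x * (bump q r x)\<^sup>2)"
    using r w(2) by (intro integral_pos_of_ball[OF \<Omega> int, where q = q and s = "r / 2" and m = m]) (auto simp: m_def)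
qed

lemma H1_bump:
  assumes "\<Omega> \<in> sets lebesgue" "0 \<le> r" "cball q r \<subseteq> \<Omega>"
  shows "H1 \<Omega> (\<lambda>x. complex_of_real (bump q r x)) (\<lambda>j x. complex_of_real (pd (bump q r) j x))"
  using assms by (intro H1_of_real_compact_support[OF _ Ck_1_bump compact_cball]) (auto simp: bump_eq_0)

lemma rayleigh_of_real:
  fixes \<phi> :: "real^2 \<Rightarrow> real" and g :: "2 \<Rightarrow> real^2 \<Rightarrow> real"
  assumes g: "integrable (lebesgue_on \<Omega>) (\<lambda>x. \<Sum>j\<in>UNIV. (g j x)\<^sup>2)"
    and F: "integrable (lebesgue_on \<Omega>) (\<lambda>x. \<Sum>j\<in>UNIV. (F x $ j * \<phi> x)\<^sup>2)"
    and a: "integrable (lebesgue_on \<Omega>) (\<lambda>x. a x * (\<phi> x)\<^sup>2)"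
  shows "rayleigh \<Omega> F a \<kappa> H (\<lambda>x. complex_of_real (\<phi> x)) (\<lambda>j x. complex_of_real (g j x)) =
    (integral\<^sup>L (lebesgue_on \<Omega>) (\<lambda>x. \<Sum>j\<in>UNIV. (g j x)\<^sup>2)
      + (\<kappa> * H)\<^sup>2 * integral\<^sup>L (lebesgue_on \<Omega>) (\<lambda>x. \<Sum>j\<in>UNIV. (F x $ j * \<phi> x)\<^sup>2)
      - \<kappa>\<^sup>2 * integral\<^sup>L (lebesgue_on \<Omega>) (\<lambda>x. a x * (\<phi> x)\<^sup>2))
     / integral\<^sup>L (lebesgue_on \<Omega>) (\<lambda>x. (\<phi> x)\<^sup>2)"
proof -
  have cmod_sq: "(cmod (complex_of_real u - \<i> * complex_of_real v * complex_of_real w))\<^sup>2 = u\<^sup>2 + (v * w)\<^sup>2"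
    for u v w
  proof -
    have "complex_of_real u - \<i> * complex_of_real v * complex_of_real w = Complex u (- (v * w))"
      by (simp add: complex_eq_iff)
    then show ?thesis
      by (simp only: cmod_power2) simp
  qed
  have integrand: "(\<lambda>x. (\<Sum>j\<in>UNIV. (cmod (complex_of_real (g j x) - \<i> * complex_of_real (\<kappa> * H * F x $ j)
          * complex_of_real (\<phi> x)))\<^sup>2) - \<kappa>\<^sup>2 * a x * (cmod (complex_of_real (\<phi> x)))\<^sup>2)
      = (\<lambda>x. (\<Sum>j\<in>UNIV. (g j x)\<^sup>2) + (\<kappa> * H)\<^sup>2 * (\<Sum>j\<in>UNIV. (F x $ j * \<phi> x)\<^sup>2)
          - \<kappa>\<^sup>2 * (a x * (\<phi> x)\<^sup>2))"
    by (rule ext, simp only: cmod_sq norm_of_real power2_abs)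
      (simp add: sum.distrib sum_distrib_left power_mult_distrib mult.assoc)
  show ?thesis
    unfolding rayleigh_def integrand using g F a by simp
qed

lemma rayleigh_ge:
  assumes Ma: "0 \<le> Ma" "\<And>x. x \<in> \<Omega> \<Longrightarrow> a x \<le> Ma"
    and \<phi>: "H1 \<Omega> \<phi> g" "integral\<^sup>L (lebesgue_on \<Omega>) (\<lambda>x. (cmod (\<phi> x))\<^sup>2) \<noteq> 0"
  shows "- (\<kappa>\<^sup>2 * Ma) \<le> rayleigh \<Omega> F a \<kappa> H \<phi> g"
proof -
  define D where "D = integral\<^sup>L (lebesgue_on \<Omega>) (\<lambda>x. (cmod (\<phi> x))\<^sup>2)"
  define f where "f x = (\<Sum>j\<in>UNIV. (cmod (g j x - \<i> * complex_of_real (\<kappa> * H * F x $ j) * \<phi> x))\<^sup>2)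
      - \<kappa>\<^sup>2 * a x * (cmod (\<phi> x))\<^sup>2" for x
  have ray: "rayleigh \<Omega> F a \<kappa> H \<phi> g = integral\<^sup>L (lebesgue_on \<Omega>) f / D"
    unfolding rayleigh_def f_def D_def ..
  have "0 \<le> D"
    unfolding D_def by (intro Bochner_Integration.integral_nonneg) auto
  then have D: "0 < D"
    using \<phi>(2) unfolding D_def by linarith
  show ?thesis
  proof (cases "integrable (lebesgue_on \<Omega>) f")
    case True
    have "integral\<^sup>L (lebesgue_on \<Omega>) (\<lambda>x. - (\<kappa>\<^sup>2 * Ma) * (cmod (\<phi> x))\<^sup>2) \<le> integral\<^sup>L (lebesgue_on \<Omega>) f"
    proof (rule integral_mono[OF _ True])
      show "integrable (lebesgue_on \<Omega>) (\<lambda>x. - (\<kappa>\<^sup>2 * Ma) * (cmod (\<phi> x))\<^sup>2)"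
        using \<phi>(1) unfolding H1_def L2_def by simp
      fix x assume "x \<in> space (lebesgue_on \<Omega>)"
      then have "\<kappa>\<^sup>2 * a x * (cmod (\<phi> x))\<^sup>2 \<le> \<kappa>\<^sup>2 * Ma * (cmod (\<phi> x))\<^sup>2"
        using Ma(2) by (intro mult_right_mono mult_left_mono) auto
      moreover have "0 \<le> (\<Sum>j\<in>UNIV. (cmod (g j x - \<i> * complex_of_real (\<kappa> * H * F x $ j) * \<phi> x))\<^sup>2)"
        by (intro sum_nonneg) auto
      moreover have "- (\<kappa>\<^sup>2 * Ma) * (cmod (\<phi> x))\<^sup>2 = - (\<kappa>\<^sup>2 * Ma * (cmod (\<phi> x))\<^sup>2)"
        by simp
      ultimately show "- (\<kappa>\<^sup>2 * Ma) * (cmod (\<phi> x))\<^sup>2 \<le> f x"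
        unfolding f_def by linarith
    qed
    then have "- (\<kappa>\<^sup>2 * Ma) * D \<le> integral\<^sup>L (lebesgue_on \<Omega>) f"
      unfolding D_def by simp
    then show ?thesis
      unfolding ray using D by (simp add: le_divide_eq)
  next
    case False \<comment> \<open>junk value: the Bochner integral of a non-integrable function is \<open>0\<close>\<close>
    then show ?thesis
      unfolding ray using Ma(1) by (simp add: not_integrable_integral_eq)
  qed
qed

lemma mu1_le_rayleigh:
  assumes "\<And>x. x \<in> \<Omega> \<Longrightarrow> a x \<le> Ma"
    and \<phi>: "H1 \<Omega> \<phi> g" "integral\<^sup>L (lebesgue_on \<Omega>) (\<lambda>x. (cmod (\<phi> x))\<^sup>2) \<noteq> 0"
  shows "mu1 \<Omega> F a \<kappa> H \<le> rayleigh \<Omega> F a \<kappa> H \<phi> g"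
  unfolding mu1_def
proof (rule cInf_lower)
  show "rayleigh \<Omega> F a \<kappa> H \<phi> g \<in> {rayleigh \<Omega> F a \<kappa> H \<phi> g | \<phi> g.
      H1 \<Omega> \<phi> g \<and> integral\<^sup>L (lebesgue_on \<Omega>) (\<lambda>x. (cmod (\<phi> x))\<^sup>2) \<noteq> 0}"
    using \<phi> by blast
  have "\<And>x. x \<in> \<Omega> \<Longrightarrow> a x \<le> max Ma 0"
    using assms(1) by (meson max.coboundedI1)
  then show "bdd_below {rayleigh \<Omega> F a \<kappa> H \<phi> g | \<phi> g.
      H1 \<Omega> \<phi> g \<and> integral\<^sup>L (lebesgue_on \<Omega>) (\<lambda>x. (cmod (\<phi> x))\<^sup>2) \<noteq> 0}"
    by (intro bdd_belowI[where m = "- (\<kappa>\<^sup>2 * max Ma 0)"]) (auto intro: rayleigh_ge)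
qed

lemma mu1_cong_weight:
  assumes "\<And>x. x \<in> \<Omega> \<Longrightarrow> a x = b x"
  shows "mu1 \<Omega> F a \<kappa> H = mu1 \<Omega> F b \<kappa> H"
proof -
  have "rayleigh \<Omega> F a \<kappa> H \<phi> g = rayleigh \<Omega> F b \<kappa> H \<phi> g" for \<phi> g
    unfolding rayleigh_def using assms by (intro arg_cong2[where f = "(/)"] Bochner_Integration.integral_cong) auto
  then show ?thesis
    unfolding mu1_def by simp
qed

lemma quadratic_eventually_neg:
  fixes A B C Cmax :: real
  assumes B: "0 \<le> B" and C: "0 < C"
  obtains \<kappa>0 where "0 < \<kappa>0"
    and "\<And>\<kappa> H. \<kappa>0 \<le> \<kappa> \<Longrightarrow> 0 \<le> H \<Longrightarrow> H \<le> Cmax / \<kappa> \<Longrightarrow> A + (\<kappa> * H)\<^sup>2 * B - \<kappa>\<^sup>2 * C < 0"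
proof -
  define X where "X = \<bar>A\<bar> + Cmax\<^sup>2 * B"
  have X: "0 \<le> X"
    using B by (simp add: X_def)
  then have sq: "0 \<le> sqrt (X / C)"
    using C by simp
  have "A + (\<kappa> * H)\<^sup>2 * B - \<kappa>\<^sup>2 * C < 0"
    if \<kappa>: "sqrt (X / C) + 1 \<le> \<kappa>" and H: "0 \<le> H" "H \<le> Cmax / \<kappa>" for \<kappa> H
  proof -
    have \<kappa>_pos: "0 < \<kappa>"
      using \<kappa> sq by linarith
    have "(sqrt (X / C))\<^sup>2 < \<kappa>\<^sup>2"
      using \<kappa> sq by (intro power_strict_mono) auto
    then have "X < \<kappa>\<^sup>2 * C"
      using X C by (simp add: pos_divide_less_eq)
    moreover have "\<kappa> * H \<le> Cmax"
      using H \<kappa>_pos by (simp add: pos_le_divide_eq mult.commute)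
    then have "(\<kappa> * H)\<^sup>2 * B \<le> Cmax\<^sup>2 * B"
      using B H \<kappa>_pos by (intro mult_right_mono power_mono) auto
    ultimately show ?thesis
      unfolding X_def by linarith
  qed
  moreover have "0 < sqrt (X / C) + 1"
    using sq by linarith
  ultimately show ?thesis
    using that by blast
qed

lemma continuous_on_bounded_above:
  fixes f :: "'a::heine_borel \<Rightarrow> real"
  assumes "continuous_on UNIV f" "bounded S"
  obtains M where "\<And>x. x \<in> S \<Longrightarrow> f x \<le> M"
proof -
  have "compact (closure S)"
    using assms(2) by (simp add: compact_closure)
  then have "bounded (f ` closure S)"
    by (intro compact_imp_bounded compact_continuous_image continuous_on_subset[OF assms(1)]) simp
  then obtain M where M: "\<forall>y\<in>f ` closure S. norm y \<le> M"
    unfolding bounded_iff by blast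
  have "f x \<le> M" if "x \<in> S" for x
  proof -
    have "norm (f x) \<le> M"
      using M that closure_subset by blast
    then show ?thesis
      by (simp add: abs_le_iff)
  qed
  with that show ?thesis
    by blast
qed

lemma cball_in_open_where_gt:
  fixes f :: "'a::metric_space \<Rightarrow> real"
  assumes \<Omega>: "open \<Omega>" and f: "continuous_on UNIV f" and p: "p \<in> closure \<Omega>" "c < f p"
  obtains q r where "0 < r" "cball q r \<subseteq> \<Omega>" "\<And>y. y \<in> cball q r \<Longrightarrow> c < f y"
proof -
  have "open {y. c < f y}"
    using f by (intro open_Collect_less continuous_on_const)
  then obtain \<delta> where \<delta>: "0 < \<delta>" "ball p \<delta> \<subseteq> {y. c < f y}"
    using p(2) openE by blast
  obtain q where q: "q \<in> \<Omega>" "dist q p < \<delta> / 2"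
    using p(1) \<delta>(1) unfolding closure_approachable by (metis half_gt_zero)
  obtain \<epsilon> where \<epsilon>: "0 < \<epsilon>" "ball q \<epsilon> \<subseteq> \<Omega>"
    using openE[OF \<Omega> q(1)] by blast
  define r where "r = min (\<epsilon> / 2) (\<delta> / 4)"
  have r: "0 < r" "r < \<epsilon>" "r < \<delta> / 2"
    using \<epsilon> \<delta> by (auto simp: r_def)
  have "cball q r \<subseteq> \<Omega>"
    using \<epsilon>(2) r(2) by (auto simp: subset_eq)
  moreover have "c < f y" if "y \<in> cball q r" for y
  proof -
    have "dist p y \<le> dist p q + dist q y"
      by (rule dist_triangle)
    also have "\<dots> < \<delta>"
      using q(2) that r(3) by (simp add: dist_commute)
    finally show ?thesis
      using \<delta>(2) by auto
  qed
  ultimately show ?thesis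
    using that r(1) by blast
qed

lemma rayleigh_bump_eventually_neg:
  fixes F :: "real^2 \<Rightarrow> real^2"
  assumes \<Omega>: "\<Omega> \<in> sets lebesgue" "finite_measure (lebesgue_on \<Omega>)"
    and F: "\<And>j. L2 \<Omega> (\<lambda>x. F x $ j)"
    and b: "continuous_on UNIV b"
    and r: "0 < r" "cball q r \<subseteq> \<Omega>"
    and b_pos: "0 < c" "\<And>y. y \<in> cball q r \<Longrightarrow> c \<le> b y"
  obtains \<kappa>0 where "0 < \<kappa>0"
    and "\<And>\<kappa> H. \<kappa>0 \<le> \<kappa> \<Longrightarrow> 0 \<le> H \<Longrightarrow> H \<le> Cmax / \<kappa> \<Longrightarrow>
      rayleigh \<Omega> F b \<kappa> H (\<lambda>x. complex_of_real (bump q r x)) (\<lambda>j x. complex_of_real (pd (bump q r) j x)) < 0"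
proof -
  let ?I = "integral\<^sup>L (lebesgue_on \<Omega>)"
  define \<phi> where "\<phi> = bump q r"
  have \<phi>: "Ck 1 \<phi>"
    unfolding \<phi>_def by (rule Ck_1_bump)
  have supp: "\<And>x. x \<notin> cball q r \<Longrightarrow> \<phi> x = 0"
    using r(1) by (simp add: \<phi>_def bump_eq_0)
  have pd_supp: "pd \<phi> j x = 0" if "x \<notin> cball q r" for j x
    using pd_eq_0_outside_support[OF closed_cball that supp] .
  have grad: "integrable (lebesgue_on \<Omega>) (\<lambda>x. \<Sum>j\<in>UNIV. (pd \<phi> j x)\<^sup>2)"
    using \<phi> unfolding Ck_1_iff
    by (intro integral_lebesgue_on_compact_support(1)[OF \<Omega>(1) _ compact_cball r(2)])
      (auto intro!: continuous_intros simp: pd_supp)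
  have "\<phi> \<in> borel_measurable (lebesgue_on \<Omega>)"
    using Ck_1_continuous[OF \<phi>] \<Omega>(1)
    by (intro continuous_imp_measurable_on_sets_lebesgue) (auto intro: continuous_on_subset)
  moreover have "\<bar>\<phi> x\<bar> \<le> r ^ 4" for x
    using bump_nonneg bump_le by (simp add: \<phi>_def)
  ultimately have mag: "integrable (lebesgue_on \<Omega>) (\<lambda>x. \<Sum>j\<in>UNIV. (F x $ j * \<phi> x)\<^sup>2)"
    using integrable_L2_mult_bounded[OF F] by (intro Bochner_Integration.integrable_sum) blast
  have mag_nonneg: "0 \<le> ?I (\<lambda>x. \<Sum>j\<in>UNIV. (F x $ j * \<phi> x)\<^sup>2)"
    by (intro Bochner_Integration.integral_nonneg sum_nonneg) auto
  have pot: "integrable (lebesgue_on \<Omega>) (\<lambda>x. b x * (\<phi> x)\<^sup>2)" "0 < ?I (\<lambda>x. b x * (\<phi> x)\<^sup>2)"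
    unfolding \<phi>_def using integral_weighted_bump_sq_pos[OF \<Omega> r b b_pos] by auto
  have norm: "0 < ?I (\<lambda>x. (\<phi> x)\<^sup>2)"
    using integral_weighted_bump_sq_pos(2)[OF \<Omega> r, of "\<lambda>_. 1" 1] by (simp add: \<phi>_def)
  obtain \<kappa>0 where "0 < \<kappa>0" and neg: "\<And>\<kappa> H. \<kappa>0 \<le> \<kappa> \<Longrightarrow> 0 \<le> H \<Longrightarrow> H \<le> Cmax / \<kappa> \<Longrightarrow>
      ?I (\<lambda>x. \<Sum>j\<in>UNIV. (pd \<phi> j x)\<^sup>2) + (\<kappa> * H)\<^sup>2 * ?I (\<lambda>x. \<Sum>j\<in>UNIV. (F x $ j * \<phi> x)\<^sup>2)
        - \<kappa>\<^sup>2 * ?I (\<lambda>x. b x * (\<phi> x)\<^sup>2) < 0"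
    using quadratic_eventually_neg[OF mag_nonneg pot(2)] by blast
  show ?thesis
  proof (rule that[OF \<open>0 < \<kappa>0\<close>])
    fix \<kappa> H assume "\<kappa>0 \<le> \<kappa>" "0 \<le> H" "H \<le> Cmax / \<kappa>"
    then show "rayleigh \<Omega> F b \<kappa> H (\<lambda>x. complex_of_real (bump q r x))
        (\<lambda>j x. complex_of_real (pd (bump q r) j x)) < 0"
      unfolding \<phi>_def[symmetric] rayleigh_of_real[OF grad mag pot(1)]
      using neg norm by (simp add: divide_neg_pos)
  qed
qed

lemma mu1_neg_of_weight_pos_on_ball:
  fixes F :: "real^2 \<Rightarrow> real^2"
  assumes \<Omega>: "\<Omega> \<in> sets lebesgue" "finite_measure (lebesgue_on \<Omega>)"
    and F: "\<And>j. L2 \<Omega> (\<lambda>x. F x $ j)"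
    and b: "continuous_on UNIV b" "\<And>x. x \<in> \<Omega> \<Longrightarrow> b x \<le> Mb"
    and r: "0 < r" "cball q r \<subseteq> \<Omega>"
    and b_pos: "0 < c" "\<And>y. y \<in> cball q r \<Longrightarrow> c \<le> b y"
  shows "\<exists>\<kappa>0>0. \<forall>\<kappa> H. \<kappa>0 \<le> \<kappa> \<and> 0 \<le> H \<and> H \<le> Cmax / \<kappa> \<longrightarrow> mu1 \<Omega> F b \<kappa> H < 0"
proof -
  obtain \<kappa>0 where "0 < \<kappa>0" and neg: "\<And>\<kappa> H. \<kappa>0 \<le> \<kappa> \<Longrightarrow> 0 \<le> H \<Longrightarrow> H \<le> Cmax / \<kappa> \<Longrightarrow>
      rayleigh \<Omega> F b \<kappa> H (\<lambda>x. complex_of_real (bump q r x)) (\<lambda>j x. complex_of_real (pd (bump q r) j x)) < 0"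
    using rayleigh_bump_eventually_neg[OF \<Omega> F b(1) r b_pos, where Cmax = Cmax] by metis
  have "0 < integral\<^sup>L (lebesgue_on \<Omega>) (\<lambda>x. (bump q r x)\<^sup>2)"
    using integral_weighted_bump_sq_pos(2)[OF \<Omega> r, of "\<lambda>_. 1" 1] by simp
  then have admissible: "H1 \<Omega> (\<lambda>x. complex_of_real (bump q r x)) (\<lambda>j x. complex_of_real (pd (bump q r) j x))"
      "integral\<^sup>L (lebesgue_on \<Omega>) (\<lambda>x. (cmod (complex_of_real (bump q r x)))\<^sup>2) \<noteq> 0"
    using H1_bump[OF \<Omega>(1) less_imp_le[OF r(1)] r(2)] by simp_all
  have "mu1 \<Omega> F b \<kappa> H < 0" if "\<kappa>0 \<le> \<kappa>" "0 \<le> H" "H \<le> Cmax / \<kappa>" for \<kappa> H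
    using mu1_le_rayleigh[where a = b and F = F and \<kappa> = \<kappa> and H = H, OF b(2) admissible] neg[OF that]
    by linarith
  with \<open>0 < \<kappa>0\<close> show ?thesis
    by blast
qed

theorem lemma9p8:
  fixes \<Omega> :: "(real^2) set" and B0 a :: "real^2 \<Rightarrow> real" and F :: "real^2 \<Rightarrow> real^2"
    and Cmax :: real
  assumes "open \<Omega>" and "bounded \<Omega>" and "simply_connected \<Omega>" and "smooth_boundary \<Omega>"
    and "Cinf_closure \<Omega> B0"
    and "is_mag_potential \<Omega> B0 F"
    and "Cmax > 0"
    and "C1_closure \<Omega> a"
    and "{x \<in> closure \<Omega>. a x > 0} \<noteq> {}"
  shows "\<exists>\<kappa>0>0. \<forall>\<kappa> H. \<kappa> \<ge> \<kappa>0 \<and> 0 \<le> H \<and> H \<le> Cmax / \<kappa> \<longrightarrow> mu1 \<Omega> F a \<kappa> H < 0"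
proof -
  have \<Omega>: "\<Omega> \<in> sets lebesgue" "finite_measure (lebesgue_on \<Omega>)"
    using lmeasurable_open[OF assms(2,1)] by (auto intro: finite_measure_lebesgue_on)
  have F: "\<And>j. L2 \<Omega> (\<lambda>x. F x $ j)"
    using assms(6) unfolding is_mag_potential_def H1_def by blast
  obtain b where b_C1: "Ck 1 b" and a_eq_b: "\<And>x. x \<in> closure \<Omega> \<Longrightarrow> a x = b x"
    using assms(8) unfolding C1_closure_def by blast
  have b: "continuous_on UNIV b"
    using b_C1 by (rule Ck_1_continuous)
  obtain Mb where Mb: "\<And>x. x \<in> \<Omega> \<Longrightarrow> b x \<le> Mb"
    using continuous_on_bounded_above[OF b assms(2)] by blast
  obtain p where p: "p \<in> closure \<Omega>" "0 < b p"
    using assms(9) a_eq_b by auto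
  have "b p / 2 < b p"
    using p(2) by simp
  then obtain q r where r: "0 < r" "cball q r \<subseteq> \<Omega>" and b_pos: "\<And>y. y \<in> cball q r \<Longrightarrow> b p / 2 < b y"
    using cball_in_open_where_gt[OF assms(1) b p(1)] by metis
  have c: "0 < b p / 2" "\<And>y. y \<in> cball q r \<Longrightarrow> b p / 2 \<le> b y"
    using p(2) b_pos less_imp_le by auto
  have "\<exists>\<kappa>0>0. \<forall>\<kappa> H. \<kappa>0 \<le> \<kappa> \<and> 0 \<le> H \<and> H \<le> Cmax / \<kappa> \<longrightarrow> mu1 \<Omega> F b \<kappa> H < 0"
    using mu1_neg_of_weight_pos_on_ball[OF \<Omega> F b Mb r c] .
  moreover have "mu1 \<Omega> F a \<kappa> H = mu1 \<Omega> F b \<kappa> H" for \<kappa> H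
    using a_eq_b closure_subset by (intro mu1_cong_weight) auto
  ultimately show ?thesis
    by simp
qed

end
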